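(* For an integer $g\ge1$, the number of numerical semigroups of genus $g$ that are both reflective and symmetric equals $1$ if $g=1$, and equals $\tau(g-1)-1$ if $g>1$, where $\tau(n)$ denotes the number of positive divisors of $n$.
   Context: A numerical semigroup is a submonoid $S$ of $(\mathbb{N}_0,+)$ with finite complement; its genus is the number of elements of $\mathbb{N}_0\setminus S$ and $\mathrm{F}(S)$ is its largest gap. $S$ is symmetric if for every $z\in\mathbb{Z}$ exactly one of $z$ and $\mathrm{F}(S)-z$ lies in $S$. A numerical semigroup $S$ of genus $g\ge1$ is called reflective if for every $z\in\{0,1,\dots,g-1\}$ exactly one of $z$ and $z+g$ belongs to $S$. *)

theory Defs
  imports Main
begin

definition numerical_semigroup :: "nat set \<Rightarrow> bool" where
  "numerical_semigroup S \<longleftrightarrow> 0 \<in> S \<and> (\<forall>a\<in>S. \<forall>b\<in>S. a + b \<in> S) \<and> finite (UNIV - S)"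

definition genus :: "nat set \<Rightarrow> nat" where
  "genus S = card (UNIV - S)"

text \<open>Frobenius number: the largest gap (meaningful when the genus is at least 1).\<close>
definition frobenius :: "nat set \<Rightarrow> nat" where
  "frobenius S = Max (UNIV - S)"

definition symmetric_sg :: "nat set \<Rightarrow> bool" where
  "symmetric_sg S \<longleftrightarrow>
     (\<forall>z::int. (z \<in> int ` S) \<noteq> (int (frobenius S) - z \<in> int ` S))"

definition reflective :: "nat set \<Rightarrow> bool" where
  "reflective S \<longleftrightarrow> genus S \<ge> 1 \<and>
     (\<forall>z < genus S. (z \<in> S) \<noteq> (z + genus S \<in> S))"

definition num_divisors :: "nat \<Rightarrow> nat" where
  "num_divisors n = card {d. 0 < d \<and> d dvd n}"

end

theory Submission
  imports Defs
begin

text \<open>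
  In a reflective semigroup of genus \<open>g\<close> every \<open>z < g\<close> is paired with \<open>z + g\<close>, exactly one
  of the two being a gap; hence all gaps lie below \<open>2g\<close>. Symmetry forces \<open>F(S) = 2g - 1\<close>,
  and then \<open>z \<in> S\<close>, \<open>z < g\<close> implies \<open>g - 1 - z \<in> S\<close> (the partner \<open>z + g\<close> is a gap, and its
  mirror image under \<open>F(S) - _\<close> is \<open>g - 1 - z\<close>). So \<open>S \<inter> [0, g)\<close> is closed under differences
  and consists of the multiples of the multiplicity \<open>m\<close> of \<open>S\<close>, with \<open>m | g - 1\<close>; this
  determines \<open>S\<close> completely. Conversely, for every divisor \<open>d \<ge> 2\<close> of \<open>g - 1\<close> the set so
  determined is a reflective symmetric numerical semigroup of genus \<open>g\<close>; for \<open>g \<ge> 2\<close> its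
  multiplicity is \<open>d\<close>, while for \<open>g = 1\<close> all of them coincide.
\<close>

section \<open>Numerical semigroups\<close>

lemma numerical_semigroup_add:
  "numerical_semigroup S \<Longrightarrow> a \<in> S \<Longrightarrow> b \<in> S \<Longrightarrow> a + b \<in> S"
  unfolding numerical_semigroup_def by blast

lemma numerical_semigroup_mult:
  assumes "numerical_semigroup S" "d \<in> S"
  shows "k * d \<in> S"
proof (induction k)
  case 0
  show ?case using assms(1) unfolding numerical_semigroup_def by simp
next
  case (Suc k)
  show ?case using numerical_semigroup_add[OF assms(1,2) Suc] by simp
qed

definition sg_multiplicity :: "nat set \<Rightarrow> nat" where
  "sg_multiplicity S = (LEAST x. 0 < x \<and> x \<in> S)"

lemma sg_multiplicity:
  assumes "numerical_semigroup S"
  shows "0 < sg_multiplicity S" "sg_multiplicity S \<in> S"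
    and "\<And>x. 0 < x \<Longrightarrow> x < sg_multiplicity S \<Longrightarrow> x \<notin> S"
proof -
  have "finite (UNIV - S)" using assms unfolding numerical_semigroup_def by blast
  then obtain n where n: "\<forall>x\<in>UNIV - S. x < n" using finite_nat_set_iff_bounded by blast
  have "\<not> Suc n < n" by simp
  hence "0 < Suc n \<and> Suc n \<in> S" using n by blast
  from LeastI[of "\<lambda>x. 0 < x \<and> x \<in> S", OF this] show "0 < sg_multiplicity S" "sg_multiplicity S \<in> S"
    unfolding sg_multiplicity_def by auto
  show "\<And>x. 0 < x \<Longrightarrow> x < sg_multiplicity S \<Longrightarrow> x \<notin> S"
    unfolding sg_multiplicity_def using not_less_Least by blast
qed

text \<open>If \<open>S \<inter> [0, n]\<close> is invariant under \<open>x \<mapsto> n - x\<close>, then it is closed under differences,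
  so reducing modulo the multiplicity stays inside \<open>S\<close>.\<close>
lemma mem_iff_multiplicity_dvd_if_mirror_closed:
  assumes S: "numerical_semigroup S"
    and mirror: "\<And>x. x \<in> S \<Longrightarrow> x \<le> n \<Longrightarrow> n - x \<in> S"
    and "x \<le> n"
  shows "x \<in> S \<longleftrightarrow> sg_multiplicity S dvd x"
proof -
  define m where "m = sg_multiplicity S"
  note m = sg_multiplicity[OF S, folded m_def]
  have diff: "y - x \<in> S" if "x \<in> S" "y \<in> S" "x \<le> y" "y \<le> n" for x y
  proof -
    have "n - y + x \<in> S" using numerical_semigroup_add[OF S mirror that(1)] that by simp
    moreover have "n - y + x = n - (y - x)" using that by simp
    ultimately have "n - (n - (y - x)) \<in> S" using mirror by simp
    thus ?thesis using that by simp
  qed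
  have "x mod m \<in> S" if "x \<in> S" "x \<le> n" for x
    using that
  proof (induction x rule: less_induct)
    case (less x)
    show ?case
    proof (cases "x < m")
      case False
      hence "x - m \<in> S" using diff[of m x] m less.prems by simp
      hence "(x - m) mod m \<in> S" using less m(1) False by simp
      thus ?thesis using False by (simp add: mod_if)
    qed (use less in simp)
  qed
  hence "x \<in> S \<Longrightarrow> x mod m = 0" using m assms(3) by (metis mod_less_divisor not_gr0)
  moreover have "m dvd x \<Longrightarrow> x \<in> S" using numerical_semigroup_mult[OF S m(2)] by (metis dvdE mult.commute)
  ultimately show ?thesis unfolding m_def[symmetric] by auto
qed

section \<open>Reflective semigroups\<close>

text \<open>For \<open>z < g\<close>, the one of \<open>z\<close> and \<open>z + g\<close> that is a gap of a reflective semigroup.\<close>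
definition reflected_gap :: "nat set \<Rightarrow> nat \<Rightarrow> nat \<Rightarrow> nat" where
  "reflected_gap S g z = (if z \<in> S then z + g else z)"

lemma card_reflected_gap_image: "card (reflected_gap S g ` {..<g}) = g"
proof -
  have "inj_on (reflected_gap S g) {..<g}" by (auto simp: inj_on_def reflected_gap_def split: if_splits)
  thus ?thesis by (simp add: card_image)
qed

lemma reflected_gap_image_subset:
  "\<forall>z<g. (z \<in> S) \<noteq> (z + g \<in> S) \<Longrightarrow> reflected_gap S g ` {..<g} \<subseteq> UNIV - S"
  by (auto simp: reflected_gap_def)

lemma gaps_eq_reflected_gap_image:
  fixes g :: nat
  assumes refl: "\<forall>z<g. (z \<in> S) \<noteq> (z + g \<in> S)" and gaps: "UNIV - S \<subseteq> {..<2*g}"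
  shows "UNIV - S = reflected_gap S g ` {..<g}"
proof (intro equalityI subsetI)
  fix x assume x: "x \<in> UNIV - S"
  show "x \<in> reflected_gap S g ` {..<g}"
  proof (cases "x < g")
    case True
    thus ?thesis using x by (auto simp: reflected_gap_def intro!: image_eqI[where x=x])
  next
    case False
    hence "x - g \<in> S" "x - g < g" using refl[rule_format, of "x - g"] x gaps by auto
    thus ?thesis using False by (auto simp: reflected_gap_def intro!: image_eqI[where x="x - g"])
  qed
qed (use reflected_gap_image_subset[OF refl] in blast)

lemma genus_eq_if_reflected:
  fixes g :: nat
  assumes "\<forall>z<g. (z \<in> S) \<noteq> (z + g \<in> S)" "UNIV - S \<subseteq> {..<2*g}"
  shows "genus S = g"
  unfolding genus_def gaps_eq_reflected_gap_image[OF assms] by (rule card_reflected_gap_image)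

lemma reflective_gaps_below:
  assumes S: "numerical_semigroup S" and "reflective S"
  shows "UNIV - S \<subseteq> {..<2 * genus S}"
proof -
  let ?g = "genus S"
  have fin: "finite (UNIV - S)" using S unfolding numerical_semigroup_def by blast
  have sub: "reflected_gap S ?g ` {..<?g} \<subseteq> UNIV - S"
    using assms(2) reflected_gap_image_subset unfolding reflective_def by blast
  have "card (reflected_gap S ?g ` {..<?g}) = card (UNIV - S)"
    unfolding card_reflected_gap_image genus_def ..
  hence eq: "reflected_gap S ?g ` {..<?g} = UNIV - S" using card_subset_eq[OF fin sub] by blast
  show ?thesis
  proof
    fix x assume "x \<in> UNIV - S"
    then obtain z where "z < ?g" "x = reflected_gap S ?g z" using eq by (metis imageE lessThan_iff)
    thus "x \<in> {..<2 * ?g}" by (simp add: reflected_gap_def)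
  qed
qed

section \<open>Symmetric semigroups\<close>

lemma int_image_mem_iff: "int n \<in> int ` S \<longleftrightarrow> n \<in> S"
  by (simp add: image_iff)

lemma symmetric_sgD:
  assumes "symmetric_sg S" "z \<le> frobenius S"
  shows "(z \<in> S) \<noteq> (frobenius S - z \<in> S)"
proof -
  have "(int z \<in> int ` S) \<noteq> (int (frobenius S) - int z \<in> int ` S)"
    using assms(1) unfolding symmetric_sg_def by blast
  thus ?thesis using assms(2) by (simp add: of_nat_diff[symmetric] int_image_mem_iff del: of_nat_diff)
qed

lemma symmetric_sgI:
  assumes F: "frobenius S = F" and above: "\<forall>x>F. x \<in> S"
    and mirror: "\<forall>z\<le>F. (z \<in> S) \<noteq> (F - z \<in> S)"
  shows "symmetric_sg S"
  unfolding symmetric_sg_def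
proof
  fix z :: int
  consider "z < 0" | n where "z = int n" "n \<le> F" | n where "z = int n" "F < n"
    by (metis nonneg_int_cases not_less)
  thus "(z \<in> int ` S) \<noteq> (int (frobenius S) - z \<in> int ` S)"
  proof cases
    case 1
    have "int (frobenius S) - z = int (F + nat (- z))" using 1 F by simp
    moreover have "F + nat (- z) \<in> S" using 1 above by simp
    ultimately have "int (frobenius S) - z \<in> int ` S" by (metis image_eqI)
    moreover have "z \<notin> int ` S" using 1 by auto
    ultimately show ?thesis by blast
  next
    case (2 n)
    hence "int (frobenius S) - z = int (F - n)" using F by (simp add: of_nat_diff)
    thus ?thesis using mirror[rule_format, OF 2(2)] 2(1) by (simp add: int_image_mem_iff)
  next
    case (3 n)
    hence "z \<in> int ` S" using above by simp
    moreover have "int (frobenius S) - z < 0" using 3 F by simp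
    hence "int (frobenius S) - z \<notin> int ` S" by auto
    ultimately show ?thesis by blast
  qed
qed

lemma frobenius_eqI:
  assumes "F \<notin> S" "\<forall>x>F. x \<in> S"
  shows "frobenius S = F"
  unfolding frobenius_def
proof (rule Max_eqI)
  have gaps: "UNIV - S \<subseteq> {..F}" using assms(2) by (meson DiffD2 atMost_iff not_le subsetI)
  thus "finite (UNIV - S)" by (rule finite_subset) simp
  show "y \<le> F" if "y \<in> UNIV - S" for y using gaps that by blast
  show "F \<in> UNIV - S" using assms(1) by simp
qed

text \<open>\<open>z \<mapsto> F(S) - z\<close> maps the gaps bijectively onto the elements of \<open>S\<close> below \<open>F(S)\<close>.\<close>
lemma symmetric_frobenius:
  assumes fin: "finite (UNIV - S)" and g: "genus S \<ge> 1" and sym: "symmetric_sg S"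
  shows "frobenius S + 1 = 2 * genus S"
proof -
  define F where "F = frobenius S"
  let ?G = "UNIV - S"
  have "?G \<noteq> {}" using g unfolding genus_def by (metis card.empty not_one_le_zero)
  hence below: "?G \<subseteq> {..F}" unfolding F_def frobenius_def using fin by auto
  have mirror: "z \<le> F \<Longrightarrow> (z \<in> S) \<noteq> (F - z \<in> S)" for z
    unfolding F_def by (rule symmetric_sgD[OF sym])
  have "(\<lambda>z. F - z) ` ?G = S \<inter> {..F}"
  proof (intro equalityI subsetI)
    fix x assume "x \<in> S \<inter> {..F}"
    thus "x \<in> (\<lambda>z. F - z) ` ?G" using mirror[of "F - x"] by (auto intro!: image_eqI[where x="F - x"])
  qed (use below mirror in auto)
  moreover have "inj_on (\<lambda>z. F - z) ?G"
    by (rule inj_onI) (metis below atMost_iff diff_diff_cancel subsetD)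
  ultimately have "card (S \<inter> {..F}) = genus S" unfolding genus_def by (metis card_image)
  moreover have "{..F} = ?G \<union> (S \<inter> {..F})" using below by auto
  hence "F + 1 = card ?G + card (S \<inter> {..F})" using card_Un_disjoint[of ?G "S \<inter> {..F}"] fin by auto
  ultimately show ?thesis unfolding F_def genus_def by simp
qed

section \<open>The reflective symmetric semigroup attached to a divisor\<close>

definition divisor_semigroup :: "nat \<Rightarrow> nat \<Rightarrow> nat set" where
  "divisor_semigroup g d =
     {x. (x < g \<and> d dvd x) \<or> (g \<le> x \<and> x < 2*g \<and> \<not> d dvd (x - g)) \<or> 2*g \<le> x}"

lemma divisor_semigroup_reflects: "\<forall>z<g. (z \<in> divisor_semigroup g d) \<noteq> (z + g \<in> divisor_semigroup g d)"
  by (auto simp: divisor_semigroup_def)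

lemma divisor_semigroup_gaps_below: "UNIV - divisor_semigroup g d \<subseteq> {..<2*g}"
  by (auto simp: divisor_semigroup_def)

lemma genus_divisor_semigroup: "genus (divisor_semigroup g d) = g"
  using genus_eq_if_reflected[OF divisor_semigroup_reflects divisor_semigroup_gaps_below] .

lemma not_dvd_if_dvd_pred:
  fixes d g :: nat
  assumes "2 \<le> d" "d dvd g - 1" "1 \<le> g"
  shows "\<not> d dvd g"
proof
  assume "d dvd g"
  hence "d dvd g - (g - 1)" using assms(2) by (rule dvd_diff_nat)
  thus False using assms by simp
qed

lemma divisor_semigroup_add_multiple:
  assumes d: "2 \<le> d" "d dvd g - 1" "1 \<le> g"
    and a: "a < g" "d dvd a" and b: "b \<in> divisor_semigroup g d"
  shows "a + b \<in> divisor_semigroup g d"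
proof -
  consider "b < g" "d dvd b" | "g \<le> b" "b < 2*g" "\<not> d dvd (b - g)" | "2*g \<le> b"
    using b unfolding divisor_semigroup_def by force
  thus ?thesis
  proof cases
    case 1
    have "\<not> d dvd (a + b - g)" if "g \<le> a + b"
      using dvd_diffD1[of d "a + b" g] that a 1 not_dvd_if_dvd_pred[OF d] by auto
    thus ?thesis using a 1 unfolding divisor_semigroup_def by auto
  next
    case 2
    have "a + b - g = a + (b - g)" using 2 by simp
    hence "\<not> d dvd (a + b - g)" using 2 dvd_add_right_iff[OF a(2), of "b - g"] by metis
    thus ?thesis using 2 unfolding divisor_semigroup_def by auto
  next
    case 3
    thus ?thesis unfolding divisor_semigroup_def by auto
  qed
qed

lemma numerical_semigroup_divisor_semigroup:
  assumes "2 \<le> d" "d dvd g - 1" "1 \<le> g"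
  shows "numerical_semigroup (divisor_semigroup g d)"
  unfolding numerical_semigroup_def
proof (intro conjI ballI)
  show "0 \<in> divisor_semigroup g d" using assms(3) by (simp add: divisor_semigroup_def)
  show "finite (UNIV - divisor_semigroup g d)"
    using divisor_semigroup_gaps_below finite_lessThan finite_subset by blast
next
  fix a b assume ab: "a \<in> divisor_semigroup g d" "b \<in> divisor_semigroup g d"
  have low: "x \<in> divisor_semigroup g d \<Longrightarrow> x < g \<Longrightarrow> d dvd x" for x
    by (simp add: divisor_semigroup_def)
  consider "a < g" | "b < g" | "g \<le> a" "g \<le> b" by linarith
  thus "a + b \<in> divisor_semigroup g d"
  proof cases
    case 1
    thus ?thesis using divisor_semigroup_add_multiple[OF assms 1 low] ab by blast
  next
    case 2
    thus ?thesis using divisor_semigroup_add_multiple[OF assms 2 low, of a] ab by (simp add: add.commute)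
  qed (auto simp: divisor_semigroup_def)
qed

lemma reflective_divisor_semigroup: "1 \<le> g \<Longrightarrow> reflective (divisor_semigroup g d)"
  using divisor_semigroup_reflects unfolding reflective_def genus_divisor_semigroup by blast

lemma frobenius_divisor_semigroup:
  assumes "d dvd g - 1" "1 \<le> g"
  shows "frobenius (divisor_semigroup g d) = 2*g - 1"
proof (rule frobenius_eqI)
  have "2*g - 1 - g = g - 1" by simp
  thus "2*g - 1 \<notin> divisor_semigroup g d" using assms unfolding divisor_semigroup_def by auto
qed (auto simp: divisor_semigroup_def)

lemma divisor_semigroup_mirror:
  assumes d: "d dvd g - 1" and "z < g"
  shows "(z \<in> divisor_semigroup g d) \<noteq> (2*g - 1 - z \<in> divisor_semigroup g d)"
proof -
  have "z \<le> g - 1" using \<open>z < g\<close> by simp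
  hence "d dvd (g - 1 - z) \<longleftrightarrow> d dvd z" using dvd_diffD1[OF _ d] dvd_diff_nat[OF d] by blast
  moreover have "2*g - 1 - z - g = g - 1 - z" "g \<le> 2*g - 1 - z" "2*g - 1 - z < 2*g"
    using \<open>z < g\<close> by auto
  ultimately show ?thesis using \<open>z < g\<close> unfolding divisor_semigroup_def by auto
qed

lemma symmetric_divisor_semigroup:
  assumes d: "d dvd g - 1" and g: "1 \<le> g"
  shows "symmetric_sg (divisor_semigroup g d)"
proof (rule symmetric_sgI[OF frobenius_divisor_semigroup[OF assms]])
  show "\<forall>x>2*g - 1. x \<in> divisor_semigroup g d" by (auto simp: divisor_semigroup_def)
  show "\<forall>z\<le>2*g - 1. (z \<in> divisor_semigroup g d) \<noteq> (2*g - 1 - z \<in> divisor_semigroup g d)"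
  proof (intro allI impI)
    fix z assume z: "z \<le> 2*g - 1"
    show "(z \<in> divisor_semigroup g d) \<noteq> (2*g - 1 - z \<in> divisor_semigroup g d)"
    proof (cases "z < g")
      case False
      hence "2*g - 1 - z < g" "2*g - 1 - (2*g - 1 - z) = z" using z g by auto
      thus ?thesis using divisor_semigroup_mirror[OF d, of "2*g - 1 - z"] by metis
    qed (rule divisor_semigroup_mirror[OF d])
  qed
qed

lemma sg_multiplicity_divisor_semigroup:
  assumes "2 \<le> d" "d dvd g - 1" "2 \<le> g"
  shows "sg_multiplicity (divisor_semigroup g d) = d"
proof -
  have "d \<le> g - 1" using assms by (simp add: dvd_imp_le)
  hence below_g: "y < g" if "y < d" for y using that by simp
  show ?thesis
    unfolding sg_multiplicity_def
  proof (rule Least_equality)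
    show "0 < d \<and> d \<in> divisor_semigroup g d"
      using assms \<open>d \<le> g - 1\<close> unfolding divisor_semigroup_def by auto
    fix y assume y: "0 < y \<and> y \<in> divisor_semigroup g d"
    show "d \<le> y"
    proof (rule ccontr)
      assume "\<not> d \<le> y"
      hence "d dvd y" using y below_g[of y] unfolding divisor_semigroup_def by auto
      thus False using \<open>\<not> d \<le> y\<close> y by (simp add: nat_dvd_not_less)
    qed
  qed
qed

section \<open>Classification\<close>

lemma reflective_symmetric_eq_divisor_semigroup:
  assumes S: "numerical_semigroup S" and R: "reflective S" and Y: "symmetric_sg S"
  defines "g \<equiv> genus S" and "m \<equiv> sg_multiplicity S"
  shows "S = divisor_semigroup g m" and "2 \<le> m" and "m dvd g - 1"
proof -
  have g: "1 \<le> g" and refl: "\<And>z. z < g \<Longrightarrow> (z \<in> S) \<noteq> (z + g \<in> S)"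
    using R unfolding reflective_def g_def by auto
  have below: "x \<notin> S \<Longrightarrow> x < 2*g" for x using reflective_gaps_below[OF S R] unfolding g_def by blast
  have fin: "finite (UNIV - S)" using S unfolding numerical_semigroup_def by blast
  have F: "frobenius S = 2*g - 1" using symmetric_frobenius[OF fin _ Y] g unfolding g_def by simp
  have zero: "0 \<in> S" using S unfolding numerical_semigroup_def by blast
  have "2*g - 1 \<notin> S" using symmetric_sgD[OF Y, of 0] zero F by simp
  hence top: "g - 1 \<in> S" using refl[of "g - 1"] g by (simp add: mult_2)
  have mirror: "g - 1 - x \<in> S" if "x \<in> S" "x \<le> g - 1" for x
  proof -
    have "x + g \<notin> S" using refl[of x] that g by auto
    moreover have "2*g - 1 - (g - 1 - x) = x + g" using that g by simp
    ultimately show ?thesis using symmetric_sgD[OF Y, of "g - 1 - x"] F by auto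
  qed
  have low: "x < g \<Longrightarrow> x \<in> S \<longleftrightarrow> m dvd x" for x
    using mem_iff_multiplicity_dvd_if_mirror_closed[OF S mirror, of x] unfolding m_def by simp
  show "m dvd g - 1" using low[of "g - 1"] top g by simp
  have "g \<notin> S" using refl[of 0] zero g by simp
  moreover have "0 < m" "m \<in> S" using sg_multiplicity[OF S] unfolding m_def by auto
  ultimately show "2 \<le> m" using numerical_semigroup_mult[OF S, of m g] by (cases "m = 1") auto
  show "S = divisor_semigroup g m"
  proof (rule set_eqI)
    fix x
    consider "x < g" | "g \<le> x" "x < 2*g" | "2*g \<le> x" by linarith
    thus "x \<in> S \<longleftrightarrow> x \<in> divisor_semigroup g m"
    proof cases
      case 2
      hence "x - g < g" "x - g + g = x" by auto
      thus ?thesis using 2 refl[of "x - g"] low[of "x - g"] by (auto simp: divisor_semigroup_def)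
    next
      case 3
      thus ?thesis using below[of x] by (auto simp: divisor_semigroup_def)
    qed (use low in \<open>auto simp: divisor_semigroup_def\<close>)
  qed
qed

lemma reflective_symmetric_semigroups_eq:
  assumes "1 \<le> g"
  shows "{S. numerical_semigroup S \<and> genus S = g \<and> reflective S \<and> symmetric_sg S}
           = divisor_semigroup g ` {d. 2 \<le> d \<and> d dvd g - 1}"
proof (intro equalityI subsetI)
  fix S assume "S \<in> {S. numerical_semigroup S \<and> genus S = g \<and> reflective S \<and> symmetric_sg S}"
  thus "S \<in> divisor_semigroup g ` {d. 2 \<le> d \<and> d dvd g - 1}"
    using reflective_symmetric_eq_divisor_semigroup by blast
next
  fix S assume "S \<in> divisor_semigroup g ` {d. 2 \<le> d \<and> d dvd g - 1}"
  thus "S \<in> {S. numerical_semigroup S \<and> genus S = g \<and> reflective S \<and> symmetric_sg S}"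
    using assms numerical_semigroup_divisor_semigroup genus_divisor_semigroup
      reflective_divisor_semigroup symmetric_divisor_semigroup by auto
qed

lemma card_divisors_ge_two:
  assumes "0 < n"
  shows "card {d. 2 \<le> d \<and> d dvd n} = num_divisors n - 1"
proof -
  have "{d. 0 < d \<and> d dvd n} = insert 1 {d. 2 \<le> d \<and> d dvd n}" by auto
  moreover have "finite {d. 2 \<le> d \<and> d dvd n}" using finite_divisors_nat[OF assms] by (auto intro: finite_subset)
  ultimately show ?thesis unfolding num_divisors_def by simp
qed

lemma divisor_semigroup_genus_one: "divisor_semigroup 1 d = UNIV - {1}"
  by (auto simp: divisor_semigroup_def not_le less_2_cases_iff)

theorem mainTheorem16:
  fixes g :: nat
  assumes "g \<ge> 1"
  shows "card {S. numerical_semigroup S \<and> genus S = g \<and> reflective S \<and> symmetric_sg S}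
           = (if g = 1 then 1 else num_divisors (g - 1) - 1)"
proof -
  let ?D = "{d. 2 \<le> d \<and> d dvd g - 1}"
  have "card (divisor_semigroup g ` ?D) = (if g = 1 then 1 else num_divisors (g - 1) - 1)"
  proof (cases "g = 1")
    case True
    have "divisor_semigroup 1 ` {d. 2 \<le> d \<and> d dvd 0} = {UNIV - {1}}"
      unfolding divisor_semigroup_genus_one by auto
    thus ?thesis using True by simp
  next
    case False
    hence g: "2 \<le> g" using assms by simp
    have "inj_on (divisor_semigroup g) ?D"
      by (rule inj_on_inverseI[of _ sg_multiplicity]) (use sg_multiplicity_divisor_semigroup g in blast)
    thus ?thesis using card_divisors_ge_two[of "g - 1"] g False by (simp add: card_image)
  qed
  thus ?thesis unfolding reflective_symmetric_semigroups_eq[OF assms] .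
qed

end
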